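(* Let $\tilde f$ satisfy (H1) and (H2), let $i\in\{0,1\}$ and $x\in\Lambda^-_i$, and let $\Lambda^-_i(x)$ be the connected component of $\Lambda^-_i$ containing $x$. Then: (1) $\Lambda^-_i(x)$ is a compact subset of $\tilde A_i$; (2) $\Lambda^-_i(x)\cap\Gamma_{i+1}\ne\emptyset$; (3) $\tilde f^{-1}(\Lambda^-_i(x))\subset\Lambda^-_i(\tilde f^{-1}(x))$; (4) there is a real number $M^-_i>0$, independent of $x$, such that $\mathrm{diam}\,p_1(\Lambda^-_i(x))<M^-_i$.
   Context: Let $\tilde f$ be a homeomorphism of $\mathbb{R}^2$ isotopic to the identity and commuting with $T(x,y)=(x+1,y)$; $p_1$ is the first coordinate projection. For a horizontal line $\Gamma$, $U^+_\Gamma$ and $U^-_\Gamma$ denote the open half-planes above and below $\Gamma$. Hypotheses: (H1) $\Gamma_0,\Gamma_1,\Gamma_2$ are horizontal lines with $\Gamma_0\subset U^+_{\Gamma_1}$, $\Gamma_1\subset U^+_{\Gamma_2}$, and $\tilde f(\Gamma_j)\subset U^-_{\Gamma_j}$ for $j=0,1,2$; (H2) $\tilde f^n(\Gamma_0)\cap\Gamma_2\ne\emptyset$ for every integer $n\ge1$. For $i\in\{0,1\}$, $\tilde A_i$ is the closed band between $\Gamma_i$ and $\Gamma_{i+1}$, and $\Lambda^-_i=\bigcap_{n\in\mathbb{N}}\big(\tilde f^n(\mathrm{Cl}(U^-_{\Gamma_i}))\cap\mathrm{Cl}(U^+_{\Gamma_{i+1}})\big)$. *)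

theory Defs
  imports "HOL-Analysis.Analysis"
begin

text \<open>The plane R^2 is modelled as real \<times> real; p_1 is fst.\<close>

definition T :: "real \<times> real \<Rightarrow> real \<times> real" where
  "T z = (fst z + 1, snd z)"

definition hline :: "real \<Rightarrow> (real \<times> real) set" where
  "hline c = {z. snd z = c}"
definition Uplus :: "real \<Rightarrow> (real \<times> real) set" where
  "Uplus c = {z. snd z > c}"
definition Uminus :: "real \<Rightarrow> (real \<times> real) set" where
  "Uminus c = {z. snd z < c}"

definition isotopic_to_id :: "(real \<times> real \<Rightarrow> real \<times> real) \<Rightarrow> bool" where
  "isotopic_to_id f \<longleftrightarrow>
     (\<exists>H :: real \<times> (real \<times> real) \<Rightarrow> real \<times> real.
        continuous_on ({0..1} \<times> UNIV) H \<and>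
        (\<forall>z. H (0, z) = z) \<and> (\<forall>z. H (1, z) = f z) \<and>
        (\<forall>t\<in>{0..1}. \<exists>g. homeomorphism UNIV UNIV (\<lambda>z. H (t, z)) g))"

definition band :: "(nat \<Rightarrow> real) \<Rightarrow> nat \<Rightarrow> (real \<times> real) set" where
  "band c i = {z. c (Suc i) \<le> snd z \<and> snd z \<le> c i}"

definition Lambda_minus ::
  "(real \<times> real \<Rightarrow> real \<times> real) \<Rightarrow> (nat \<Rightarrow> real) \<Rightarrow> nat \<Rightarrow> (real \<times> real) set" where
  "Lambda_minus f c i =
     (\<Inter>n. (f ^^ n) ` closure (Uminus (c i)) \<inter> closure (Uplus (c (Suc i))))"

end

theory Submission
  imports Defs
begin

text \<open>Since f pushes each line \<Gamma>_j below itself, a connectedness argument shows that f maps the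
  closed half-plane below \<Gamma>_j into the open one (the other alternative, f mapping the upper
  half-plane below \<Gamma>_j, is excluded by (H2) for j = 2 and by periodicity for j = 0, 1). Hence
  \<Lambda>^-_i is the intersection of the decreasing closed sets f^n(Cl U^-_{\<Gamma>_i}) \<inter> Cl U^+_{\<Gamma>_{i+1}}.
  By (H2) some point w of \<Gamma>_0 is mapped to \<Gamma>_2; the image of a segment from w into U^+_{\<Gamma>_0}
  yields an arc crossing the strip between \<Gamma>_2 and \<Gamma>_0 whose integer translates avoid
  f(Cl U^-_{\<Gamma>_i}) \<inter> Cl U^+_{\<Gamma>_{i+1}}. By the Fashoda meet theorem a connected set in the strip
  that avoids all these translates has bounded horizontal extent, which gives compactness of the
  components and the uniform bound on their projections. Pushing a vertical ray down from a
  preimage shows that every component of the n-th approximating set meets \<Gamma>_{i+1}, and a nested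
  compactness argument passes this to \<Lambda>^-_i. Invariance under f^{-1} holds because f never
  lifts a point below \<Gamma>_{i+1} back above it.\<close>

lemma closure_Uminus: "closure (Uminus c) = {z. snd z \<le> c}"
proof -
  have "closure {z::real \<times> real. (0, 1) \<bullet> z < c} = {z. (0, 1) \<bullet> z \<le> c}"
    by (rule closure_halfspace_lt) (simp add: zero_prod_def)
  then show ?thesis by (simp add: inner_prod_def Uminus_def)
qed

lemma closure_Uplus: "closure (Uplus c) = {z. c \<le> snd z}"
proof -
  have "closure {z::real \<times> real. (0, -1) \<bullet> z < -c} = {z. (0, -1) \<bullet> z \<le> -c}"
    by (rule closure_halfspace_lt) (simp add: zero_prod_def)
  then show ?thesis by (simp add: inner_prod_def Uplus_def)
qed

lemma connected_disjoint_hline: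
  assumes "connected S" "S \<inter> hline d = {}"
  shows "S \<subseteq> Uminus d \<or> S \<subseteq> Uplus d"
proof (rule ccontr)
  assume "\<not> ?thesis"
  then obtain p q where pq: "p \<in> S" "p \<notin> Uminus d" "q \<in> S" "q \<notin> Uplus d"
    by blast
  have "connected (snd ` S)"
    using assms(1) by (intro connected_continuous_image continuous_intros)
  then have "d \<in> snd ` S"
    by (rule connectedD_interval[of _ "snd q" "snd p"]) (use pq in \<open>auto simp: Uminus_def Uplus_def\<close>)
  then show False using assms(2) by (auto simp: hline_def)
qed

lemma homeomorphism_below_line_dichotomy:
  fixes f :: "real \<times> real \<Rightarrow> real \<times> real"
  assumes hom: "homeomorphism UNIV UNIV f g" and below: "f ` hline d \<subseteq> Uminus d"
  shows "(\<forall>p. snd p \<le> d \<longrightarrow> snd (f p) < d) \<or> (\<forall>p. d \<le> snd p \<longrightarrow> snd (f p) < d)"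
proof -
  let ?B = "g ` closure (Uplus d)"
  have fg: "f (g y) = y" and gf: "g (f y) = y" for y
    using hom by (simp_all add: homeomorphism_apply1 homeomorphism_apply2)
  have "Uplus d = {z. d < (0, 1) \<bullet> z}"
    by (auto simp: Uplus_def inner_prod_def)
  then have "convex (Uplus d)"
    by (simp add: convex_halfspace_gt)
  then have "connected ?B"
    using homeomorphism_cont2[OF hom]
    by (intro connected_continuous_image convex_connected convex_closure)
      (auto intro: continuous_on_subset)
  moreover have "?B \<inter> hline d = {}"
  proof -
    have False if "q \<in> closure (Uplus d)" "g q \<in> hline d" for q
    proof -
      have "f (g q) \<in> Uminus d" using below that(2) by blast
      then show False using that(1) by (simp add: fg closure_Uplus Uminus_def)
    qed
    then show ?thesis by blast
  qed
  ultimately have "?B \<subseteq> Uminus d \<or> ?B \<subseteq> Uplus d"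
    by (rule connected_disjoint_hline)
  moreover have inB: "p \<in> ?B" if "d \<le> snd (f p)" for p
    using that by (intro image_eqI[of _ g "f p"]) (simp_all add: gf closure_Uplus)
  ultimately consider "?B \<subseteq> Uminus d" | "?B \<subseteq> Uplus d" by blast
  then show ?thesis
  proof cases
    case 1
    have "snd (f p) < d" if "d \<le> snd p" for p
      using inB[of p] 1 that by (force simp: Uminus_def)
    then show ?thesis by blast
  next
    case 2
    have "snd (f p) < d" if "snd p \<le> d" for p
      using inB[of p] 2 that by (force simp: Uplus_def)
    then show ?thesis by blast
  qed
qed

lemma homeomorphism_funpow:
  assumes "homeomorphism S S f g"
  shows "homeomorphism S S (f ^^ n) (g ^^ n)"
proof (induction n)
  case 0
  show ?case using homeomorphism_ident[of S] by (simp add: id_def)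
next
  case (Suc n)
  have "f ^^ Suc n = f \<circ> f ^^ n" "g ^^ Suc n = g ^^ n \<circ> g"
    by (simp, rule funpow_Suc_right)
  then show ?case
    using homeomorphism_compose[OF Suc assms] by (simp only:)
qed

lemma continuous_on_first_reach:
  fixes F :: "real \<Rightarrow> real"
  assumes F: "continuous_on {a..b} F" and "a \<le> b" "F a \<le> y" "y \<le> F b"
  obtains t where "a \<le> t" "t \<le> b" "F t = y" "\<And>s. a \<le> s \<Longrightarrow> s \<le> t \<Longrightarrow> F s \<le> y"
proof -
  define A where "A = {a..b} \<inter> F -` {y..}"
  have "closed A"
    unfolding A_def by (rule continuous_closed_preimage[OF F]) auto
  moreover have "bounded A"
    by (rule bounded_subset[of "{a..b}"]) (auto simp: A_def)
  ultimately have "compact A"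
    by (simp add: compact_eq_bounded_closed)
  moreover have "b \<in> A" using assms by (simp add: A_def)
  ultimately obtain t where t: "t \<in> A" "\<And>s. s \<in> A \<Longrightarrow> t \<le> s"
    using compact_attains_inf[OF \<open>compact A\<close>] by (metis empty_iff)
  then have t_in: "a \<le> t" "t \<le> b" "y \<le> F t" by (auto simp: A_def)
  have "continuous_on {a..t} F"
    using t_in by (intro continuous_on_subset[OF F]) auto
  then obtain s where s: "a \<le> s" "s \<le> t" "F s = y"
    using IVT'[of F a y t] assms(3) t_in by blast
  have "s \<in> A" using s t_in by (simp add: A_def)
  then have "F t = y" using t(2) s by fastforce
  moreover have "F s \<le> y" if "a \<le> s" "s \<le> t" for s
  proof (rule ccontr)
    assume "\<not> F s \<le> y"
    then have "s \<in> A" using that t_in by (simp add: A_def)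
    then have "s = t" using t(2) that by fastforce
    then show False using \<open>\<not> F s \<le> y\<close> \<open>F t = y\<close> by simp
  qed
  ultimately show ?thesis
    using that t_in by blast
qed

lemma path_subpath_between_levels:
  fixes \<gamma> :: "real \<Rightarrow> 'a::real_normed_vector" and h :: "'a \<Rightarrow> real"
  assumes \<gamma>: "path \<gamma>" and h: "continuous_on UNIV h"
    and "h (pathstart \<gamma>) \<le> \<alpha>" "\<alpha> < \<beta>" "\<beta> \<le> h (pathfinish \<gamma>)"
  obtains \<delta> where "path \<delta>" "path_image \<delta> \<subseteq> path_image \<gamma>"
    "h (pathstart \<delta>) = \<alpha>" "h (pathfinish \<delta>) = \<beta>" "\<And>z. z \<in> path_image \<delta> \<Longrightarrow> \<alpha> \<le> h z \<and> h z \<le> \<beta>"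
proof -
  define F where "F = h \<circ> \<gamma>"
  have F: "continuous_on {0..1} F"
    unfolding F_def o_def using \<gamma> by (intro continuous_on_compose2[OF h]) (auto simp: path_def)
  obtain t1 where t1: "0 \<le> t1" "t1 \<le> 1" "F t1 = \<beta>" "\<And>s. 0 \<le> s \<Longrightarrow> s \<le> t1 \<Longrightarrow> F s \<le> \<beta>"
    by (rule continuous_on_first_reach[OF F, of \<beta>])
      (use assms in \<open>auto simp: F_def pathstart_def pathfinish_def\<close>)
  \<comment> \<open>the last time before t1 at which F is at level \<alpha>, found as a first reach of the reversed path\<close>
  have "continuous_on {0..t1} (\<lambda>s. - F (t1 - s))"
    using t1 by (intro continuous_intros continuous_on_compose2[OF F]) auto
  then obtain t where t: "0 \<le> t" "t \<le> t1" "- F (t1 - t) = - \<alpha>"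
    "\<And>s. 0 \<le> s \<Longrightarrow> s \<le> t \<Longrightarrow> - F (t1 - s) \<le> - \<alpha>"
    by (rule continuous_on_first_reach[where y="- \<alpha>"]) (use assms t1 in \<open>auto simp: F_def pathstart_def\<close>)
  define t0 where "t0 = t1 - t"
  have levels: "\<alpha> \<le> F s \<and> F s \<le> \<beta>" if "t0 \<le> s" "s \<le> t1" for s
    using t(4)[of "t1 - s"] t1(4)[of s] that t by (auto simp: t0_def)
  show ?thesis
  proof
    show "path (subpath t0 t1 \<gamma>)" using \<gamma> t t1 by (simp add: t0_def)
    show "path_image (subpath t0 t1 \<gamma>) \<subseteq> path_image \<gamma>"
      using t t1 by (intro path_image_subpath_subset) (auto simp: t0_def)
    show "h (pathstart (subpath t0 t1 \<gamma>)) = \<alpha>" "h (pathfinish (subpath t0 t1 \<gamma>)) = \<beta>"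
      using t t1 by (simp_all add: t0_def F_def)
    show "\<alpha> \<le> h z \<and> h z \<le> \<beta>" if "z \<in> path_image (subpath t0 t1 \<gamma>)" for z
      using that levels t by (auto simp: path_image_subpath t0_def F_def)
  qed
qed

lemma fashoda_real_prod:
  fixes p q :: "real \<Rightarrow> real \<times> real"
  assumes "path p" "path q"
    and "path_image p \<subseteq> {a1..b1} \<times> {a2..b2}" "path_image q \<subseteq> {a1..b1} \<times> {a2..b2}"
    and "fst (pathstart p) = a1" "fst (pathfinish p) = b1"
    and "snd (pathstart q) = a2" "snd (pathfinish q) = b2"
  shows "path_image p \<inter> path_image q \<noteq> {}"
proof -
  define v :: "real \<times> real \<Rightarrow> real^2" where "v z = (\<chi> k. if k = 1 then fst z else snd z)" for z
  have v_nth [simp]: "v z $ 1 = fst z" "v z $ 2 = snd z" for z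
    by (simp_all add: v_def)
  have "inj v" by (rule injI) (metis v_nth prod_eq_iff)
  have cont_v: "continuous_on S v" for S
    unfolding v_def
    by (intro continuous_on_vec_lambda, rename_tac k, case_tac "k = 1") (auto intro: continuous_intros)
  have box: "v ` ({a1..b1} \<times> {a2..b2}) \<subseteq> cbox (v (a1, a2)) (v (b1, b2))"
    by (auto simp: mem_box_cart forall_2)
  obtain z where "z \<in> path_image (v \<circ> p)" "z \<in> path_image (v \<circ> q)"
  proof (rule fashoda[of "v \<circ> p" "v \<circ> q"])
    show "path (v \<circ> p)" "path (v \<circ> q)"
      using assms by (auto intro!: path_continuous_image cont_v)
    show "path_image (v \<circ> p) \<subseteq> cbox (v (a1, a2)) (v (b1, b2))"
      "path_image (v \<circ> q) \<subseteq> cbox (v (a1, a2)) (v (b1, b2))"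
      using image_mono[OF assms(3), of v] image_mono[OF assms(4), of v] box
      by (simp_all add: path_image_compose)
  qed (use assms in \<open>auto simp: pathstart_compose pathfinish_compose\<close>)
  then show ?thesis
    using \<open>inj v\<close> by (auto simp: path_image_compose inj_eq)
qed

lemma path_crossing_strip_meets:
  fixes \<gamma> \<sigma> :: "real \<Rightarrow> real \<times> real"
  assumes \<gamma>: "path \<gamma>" "path_image \<gamma> \<subseteq> UNIV \<times> {a..b}"
    and ends: "fst (pathstart \<gamma>) \<le> X1" "X1 < X2" "X2 \<le> fst (pathfinish \<gamma>)"
    and \<sigma>: "path \<sigma>" "path_image \<sigma> \<subseteq> {X1..X2} \<times> {a..b}"
      "snd (pathstart \<sigma>) = a" "snd (pathfinish \<sigma>) = b"
  shows "path_image \<gamma> \<inter> path_image \<sigma> \<noteq> {}"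
proof -
  obtain \<delta> where \<delta>: "path \<delta>" "path_image \<delta> \<subseteq> path_image \<gamma>"
    "fst (pathstart \<delta>) = X1" "fst (pathfinish \<delta>) = X2"
    "\<And>z. z \<in> path_image \<delta> \<Longrightarrow> X1 \<le> fst z \<and> fst z \<le> X2"
    by (rule path_subpath_between_levels[OF \<gamma>(1), of fst X1 X2])
      (use ends in \<open>auto intro: continuous_intros\<close>)
  have "path_image \<delta> \<subseteq> {X1..X2} \<times> {a..b}"
    using \<delta>(2,5) \<gamma>(2) by (force simp: mem_Times_iff)
  then have "path_image \<delta> \<inter> path_image \<sigma> \<noteq> {}"
    using \<delta> \<sigma> by (intro fashoda_real_prod) auto
  then show ?thesis using \<delta>(2) by blast
qed

lemma connected_avoiding_translates_fst_bounded:
  fixes \<sigma> :: "real \<Rightarrow> real \<times> real"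
  assumes \<sigma>: "path \<sigma>" "path_image \<sigma> \<subseteq> {m..M} \<times> {a..b}"
      "snd (pathstart \<sigma>) = a" "snd (pathfinish \<sigma>) = b"
    and C: "connected C" "C \<subseteq> UNIV \<times> {a..b}"
    and avoid: "\<And>k::int. (\<lambda>z. z + (of_int k, 0)) ` path_image \<sigma> \<inter> C = {}"
    and pq: "p \<in> C" "q \<in> C"
  shows "fst q - fst p \<le> M - m + 2"
proof (rule ccontr)
  assume far: "\<not> ?thesis"
  have "m \<le> M" using \<sigma>(2) pathstart_in_path_image[of \<sigma>] by auto
  define k where "k = \<lfloor>fst p - m\<rfloor> + 1"
  have k: "fst p < m + of_int k" "m + of_int k \<le> fst p + 1"
    unfolding k_def by linarith+
  define \<sigma>k where "\<sigma>k t = \<sigma> t + (of_int k, 0)" for t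
  have "path \<sigma>k"
    unfolding \<sigma>k_def using \<sigma>(1) by (auto simp: path_def intro: continuous_intros)
  have image_\<sigma>k: "path_image \<sigma>k = (\<lambda>z. z + (of_int k, 0)) ` path_image \<sigma>"
    by (auto simp: path_image_def \<sigma>k_def)
  define S where "S = UNIV \<times> {a..b} \<inter> - path_image \<sigma>k"
  have "openin (top_of_set (UNIV \<times> {a..b})) S"
    unfolding S_def using closed_path_image[OF \<open>path \<sigma>k\<close>] by (intro openin_open_Int) auto
  moreover have "locally path_connected ((UNIV :: real set) \<times> {a..b})"
    by (rule convex_imp_locally_path_connected) (simp add: convex_Times)
  ultimately have "locally path_connected S"
    by (rule locally_open_subset[rotated])
  moreover have "C \<subseteq> S"
    using C(2) avoid[of k] by (auto simp: S_def image_\<sigma>k)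
  then have "q \<in> connected_component_set S p"
    using connected_component_maximal[OF pq(1) C(1)] pq(2) by blast
  ultimately obtain \<gamma> where \<gamma>: "path \<gamma>" "path_image \<gamma> \<subseteq> S" "pathstart \<gamma> = p" "pathfinish \<gamma> = q"
    by (auto simp: path_component_eq_connected_component[symmetric] path_component_def)
  have "path_image \<gamma> \<inter> path_image \<sigma>k \<noteq> {}"
  proof (rule path_crossing_strip_meets[OF \<gamma>(1) _ _ _ _ \<open>path \<sigma>k\<close>])
    show "path_image \<gamma> \<subseteq> UNIV \<times> {a..b}" using \<gamma>(2) by (auto simp: S_def)
    show "path_image \<sigma>k \<subseteq> {m + of_int k..M + of_int k + 1} \<times> {a..b}"
      using \<sigma>(2) by (auto simp: image_\<sigma>k)
    show "snd (pathstart \<sigma>k) = a" "snd (pathfinish \<sigma>k) = b"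
      using \<sigma>(3,4) by (simp_all add: \<sigma>k_def pathstart_def pathfinish_def)
  qed (use \<gamma> k far \<open>m \<le> M\<close> in auto)
  then show False using \<gamma>(2) by (auto simp: S_def)
qed

lemma connected_component_Inter_meets:
  fixes K :: "nat \<Rightarrow> 'a::euclidean_space set"
  assumes mono: "\<And>m n. m \<le> n \<Longrightarrow> K n \<subseteq> K m"
    and compact: "\<And>n. compact (connected_component_set (K n) x)"
    and L: "closed L" "\<And>n. connected_component_set (K n) x \<inter> L \<noteq> {}"
  shows "connected_component_set (\<Inter>n. K n) x \<inter> L \<noteq> {}"
proof -
  define D where "D n = connected_component_set (K n) x" for n
  have D_mono: "D n \<subseteq> D m" if "m \<le> n" for m n
    unfolding D_def by (intro connected_component_mono mono that)
  have "\<Inter>(range (\<lambda>n. D n \<inter> L)) \<noteq> {}"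
  proof (rule compact_nest)
    show "compact (D n \<inter> L)" "D n \<inter> L \<noteq> {}" for n
      using compact L by (simp_all add: D_def compact_Int_closed)
    show "D n \<inter> L \<subseteq> D m \<inter> L" if "m \<le> n" for m n
      using D_mono[OF that] by blast
  qed
  then obtain y where y: "y \<in> L" "\<And>n. y \<in> D n" by blast
  have "connected (\<Inter>(range D))"
    using compact D_mono by (intro connected_nest) (auto simp: D_def)
  moreover have "x \<in> \<Inter>(range D)"
  proof -
    have "x \<in> K n" for n
      using L(2)[of n] connected_component_eq_empty by blast
    then show ?thesis by (simp add: D_def connected_component_refl)
  qed
  moreover have "\<Inter>(range D) \<subseteq> (\<Inter>n. K n)"
    using connected_component_subset by (fastforce simp: D_def)
  ultimately have "\<Inter>(range D) \<subseteq> connected_component_set (\<Inter>n. K n) x"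
    by (intro connected_component_maximal)
  then show ?thesis using y by blast
qed

locale periodic_homeomorphism =
  fixes f g :: "real \<times> real \<Rightarrow> real \<times> real"
  assumes homeo: "homeomorphism UNIV UNIV f g"
    and commute_T: "\<And>z. f (T z) = T (f z)"
begin

lemma g_f [simp]: "g (f z) = z" and f_g [simp]: "f (g z) = z"
  using homeo by (simp_all add: homeomorphism_apply1 homeomorphism_apply2)

lemma inj_f: "inj f"
  by (metis g_f injI)

lemma inv_f_eq_g: "inv f = g"
  by (rule ext, rule inv_f_eq[OF inj_f]) simp

lemma continuous_on_g: "continuous_on S g"
  using homeomorphism_cont2[OF homeo] by (rule continuous_on_subset) simp

lemma f_translate: "f (z + (of_int k, 0)) = f z + (of_int k, 0)"
proof (induction k arbitrary: z rule: int_induct[where k = 0])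
  case base
  show ?case by (simp add: zero_prod_def[symmetric])
next
  case (step1 k)
  have "z + (of_int (k + 1), 0) = T (z + (of_int k, 0))" by (simp add: T_def prod_eq_iff)
  then have "f (z + (of_int (k + 1), 0)) = T (f z + (of_int k, 0))"
    by (simp only: commute_T step1.IH)
  then show ?case by (simp add: T_def prod_eq_iff)
next
  case (step2 k)
  have "z + (of_int k, 0) = T (z + (of_int (k - 1), 0))" by (simp add: T_def prod_eq_iff)
  then have "T (f (z + (of_int (k - 1), 0))) = f (z + (of_int k, 0))"
    by (simp only: commute_T)
  also have "\<dots> = f z + (of_int k, 0)"
    by (rule step2.IH)
  finally have "T (f (z + (of_int (k - 1), 0))) = f z + (of_int k, 0)" .
  then show ?case by (simp add: T_def prod_eq_iff)
qed

lemma bdd_above_snd_image_band: "bdd_above (snd ` f ` (UNIV \<times> {a..b}))"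
proof -
  have "snd (f z) \<in> snd ` f ` ({0..1} \<times> {a..b})" if "snd z \<in> {a..b}" for z
  proof -
    define k where "k = \<lfloor>fst z\<rfloor>"
    have "z = (fst z - of_int k, snd z) + (of_int k, 0)" by simp
    then have "snd (f z) = snd (f (fst z - of_int k, snd z))"
      by (metis f_translate snd_add add.right_neutral snd_conv)
    moreover have "(fst z - of_int k, snd z) \<in> {0..1} \<times> {a..b}"
      using that floor_correct[of "fst z"] unfolding k_def by simp linarith
    ultimately show ?thesis by blast
  qed
  then have "snd ` f ` (UNIV \<times> {a..b}) \<subseteq> snd ` f ` ({0..1} \<times> {a..b})"
    by force
  moreover have "compact (snd ` f ` ({0..1} \<times> {a..b}))"
    using homeomorphism_cont1[OF homeo]
    by (intro compact_continuous_image compact_Times continuous_intros)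
      (auto intro: continuous_on_subset)
  ultimately show ?thesis
    by (meson bdd_above_mono bounded_imp_bdd_above compact_imp_bounded)
qed

lemma homeomorphism_funpow_f: "homeomorphism UNIV UNIV (f ^^ n) (g ^^ n)"
  by (rule homeomorphism_funpow[OF homeo])

lemma closed_funpow_image: "closed A \<Longrightarrow> closed ((f ^^ n) ` A)"
  using homeomorphism_imp_closed_map[OF homeomorphism_funpow_f, of A] by simp

end

locale pushed_lines = periodic_homeomorphism +
  fixes c :: "nat \<Rightarrow> real"
  assumes c_decreasing: "c 1 < c 0" "c 2 < c 1"
    and lines_pushed_down: "\<And>j. j \<le> 2 \<Longrightarrow> f ` hline (c j) \<subseteq> Uminus (c j)"
    and line0_meets_line2: "f ` hline (c 0) \<inter> hline (c 2) \<noteq> {}"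
begin

lemma line0_to_line2:
  obtains w where "snd w = c 0" "snd (f w) = c 2"
  using line0_meets_line2 by (auto simp: hline_def)

lemma halfplane_dichotomy:
  "j \<le> 2 \<Longrightarrow> (\<forall>p. snd p \<le> c j \<longrightarrow> snd (f p) < c j) \<or> (\<forall>p. c j \<le> snd p \<longrightarrow> snd (f p) < c j)"
  by (rule homeomorphism_below_line_dichotomy[OF homeo lines_pushed_down])

lemma snd_f_lt_c2:
  assumes "snd p \<le> c 2"
  shows "snd (f p) < c 2"
proof -
  obtain w where w: "snd w = c 0" "snd (f w) = c 2" by (rule line0_to_line2)
  have "\<not> (\<forall>p. c 2 \<le> snd p \<longrightarrow> snd (f p) < c 2)"
  proof
    assume upper: "\<forall>p. c 2 \<le> snd p \<longrightarrow> snd (f p) < c 2"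
    have "c 2 \<le> snd w" using w(1) c_decreasing by linarith
    then have "snd (f w) < c 2" using upper by blast
    then show False using w by simp
  qed
  then show ?thesis using halfplane_dichotomy[of 2] assms by blast
qed

lemma snd_f_lt:
  assumes "j \<le> 2" "snd p \<le> c j"
  shows "snd (f p) < c j"
proof (cases "j = 2")
  case True
  then show ?thesis using assms snd_f_lt_c2 by simp
next
  case False
  then have "j = 0 \<or> j = 1" using assms(1) by auto
  then have "c 2 < c j" using c_decreasing by auto
  obtain B where B: "\<And>p. snd p \<in> {c 2..c j} \<Longrightarrow> snd (f p) \<le> B"
    using bdd_above_snd_image_band[of "c 2" "c j"] by (force simp: bdd_above_def mem_Times_iff)
  \<comment> \<open>if f moved the upper half-plane below \<Gamma>_j, the image of f would be bounded above\<close>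
  have "\<not> (\<forall>p. c j \<le> snd p \<longrightarrow> snd (f p) < c j)"
  proof
    assume upper: "\<forall>p. c j \<le> snd p \<longrightarrow> snd (f p) < c j"
    have "snd (f p) \<le> max (c j) B" for p
    proof -
      consider "snd p \<le> c 2" | "snd p \<in> {c 2..c j}" | "c j \<le> snd p"
        by fastforce
      then show ?thesis
      proof cases
        case 1
        then show ?thesis using snd_f_lt_c2[of p] \<open>c 2 < c j\<close> by simp
      next
        case 2
        then show ?thesis using B[of p] by simp
      next
        case 3
        then have "snd (f p) < c j" using upper by blast
        then show ?thesis by simp
      qed
    qed
    from this[of "g (0, max (c j) B + 1)"] show False by simp
  qed
  then show ?thesis using halfplane_dichotomy assms by blast
qed

lemma snd_funpow_lt: "j \<le> 2 \<Longrightarrow> snd p < c j \<Longrightarrow> snd ((f ^^ n) p) < c j"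
  by (induction n) (auto dest: snd_f_lt[of j] intro: less_imp_le)

lemma crossing_barrier:
  obtains \<sigma> w where "path \<sigma>" "path_image \<sigma> \<subseteq> UNIV \<times> {c 2..c 0}"
    "snd (pathstart \<sigma>) = c 2" "snd (pathfinish \<sigma>) = c 0" "snd w = c 0" "snd (f w) = c 2"
    "\<And>u. u \<in> path_image \<sigma> \<Longrightarrow> u = f w \<or> (\<exists>v. u = f v \<and> c 0 < snd v)"
proof -
  obtain w where w: "snd w = c 0" "snd (f w) = c 2" by (rule line0_to_line2)
  define p where "p = g (0, c 0)"
  have "c 0 < snd p"
    using snd_f_lt[of 0 p] by (force simp: p_def)
  \<comment> \<open>f maps the segment from w to p onto an arc from \<Gamma>_2 to \<Gamma>_0 lying in f(U^+_{\<Gamma>_0}), apart from f w\<close>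
  have above: "u = f w \<or> (\<exists>v. u = f v \<and> c 0 < snd v)" if u: "u \<in> f ` closed_segment w p" for u
  proof -
    obtain t where t: "0 \<le> t" "t \<le> 1" "u = f ((1 - t) *\<^sub>R w + t *\<^sub>R p)"
      using u by (auto simp: closed_segment_def)
    show ?thesis
    proof (cases "t = 0")
      case False
      have "snd ((1 - t) *\<^sub>R w + t *\<^sub>R p) = c 0 + t * (snd p - c 0)"
        using w by (simp add: algebra_simps)
      also have "\<dots> > c 0"
        using t False \<open>c 0 < snd p\<close> by simp
      finally show ?thesis using t(3) by blast
    qed (use t in simp)
  qed
  have "path (f \<circ> linepath w p)"
    using homeomorphism_cont1[OF homeo]
    by (intro path_continuous_image) (auto intro: continuous_on_subset)
  then obtain \<sigma> where \<sigma>: "path \<sigma>" "path_image \<sigma> \<subseteq> path_image (f \<circ> linepath w p)"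
    "snd (pathstart \<sigma>) = c 2" "snd (pathfinish \<sigma>) = c 0"
    "\<And>z. z \<in> path_image \<sigma> \<Longrightarrow> c 2 \<le> snd z \<and> snd z \<le> c 0"
    by (rule path_subpath_between_levels[of _ snd "c 2" "c 0"])
      (use w c_decreasing in \<open>auto intro: continuous_intros simp: pathstart_compose pathfinish_compose p_def\<close>)
  show ?thesis
  proof (rule that[OF \<sigma>(1) _ \<sigma>(3,4) w])
    show "path_image \<sigma> \<subseteq> UNIV \<times> {c 2..c 0}" using \<sigma>(5) by (auto simp: mem_Times_iff)
    show "u = f w \<or> (\<exists>v. u = f v \<and> c 0 < snd v)" if "u \<in> path_image \<sigma>" for u
    proof (rule above)
      show "u \<in> f ` closed_segment w p"
        using \<sigma>(2) that by (auto simp: path_image_compose)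
    qed
  qed
qed

end

locale lambda_band = pushed_lines +
  fixes i :: nat
  assumes i_le_1: "i \<le> 1"
begin

definition approx :: "nat \<Rightarrow> (real \<times> real) set" where
  "approx n = (f ^^ n) ` {z. snd z \<le> c i} \<inter> {z. c (Suc i) \<le> snd z}"

lemma c_i: "c i \<le> c 0" "c 2 \<le> c (Suc i)" "c (Suc i) < c i" "Suc i \<le> 2"
  using c_decreasing i_le_1 by (cases i; simp add: numeral_2_eq_2)+

lemma Lambda_minus_eq: "Lambda_minus f c i = (\<Inter>n. approx n)"
  by (simp add: Lambda_minus_def approx_def closure_Uminus closure_Uplus)

lemma closed_approx: "closed (approx n)"
  unfolding approx_def
  by (intro closed_Int closed_funpow_image closed_Collect_le continuous_intros)

lemma approx_Suc_subset: "approx (Suc n) \<subseteq> approx n"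
proof
  fix y assume "y \<in> approx (Suc n)"
  then obtain p where p: "snd p \<le> c i" "y = (f ^^ Suc n) p" "c (Suc i) \<le> snd y"
    by (auto simp: approx_def)
  have "y = (f ^^ n) (f p)"
    using p(2) by (simp add: funpow_swap1)
  moreover have "snd (f p) \<le> c i"
    using snd_f_lt[of i p] p(1) c_i(4) by simp
  ultimately have "y \<in> (f ^^ n) ` {z. snd z \<le> c i}" by blast
  then show "y \<in> approx n" using p(3) by (simp add: approx_def)
qed

lemma approx_antimono: "m \<le> n \<Longrightarrow> approx n \<subseteq> approx m"
  by (rule lift_Suc_antimono_le[of approx, OF approx_Suc_subset])

lemma approx_1_subset_strip: "approx 1 \<subseteq> UNIV \<times> {c 2..c 0}"
proof
  fix y assume "y \<in> approx 1"
  then obtain p where "snd p \<le> c i" "y = f p" "c (Suc i) \<le> snd y"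
    by (auto simp: approx_def)
  then show "y \<in> UNIV \<times> {c 2..c 0}"
    using snd_f_lt[of i p] c_i by (simp add: mem_Times_iff)
qed

lemma approx_1_connected_fst_bounded:
  obtains W where "\<And>C p q. connected C \<Longrightarrow> C \<subseteq> approx 1 \<Longrightarrow> p \<in> C \<Longrightarrow> q \<in> C \<Longrightarrow> \<bar>fst q - fst p\<bar> \<le> W"
proof -
  obtain \<sigma> w where \<sigma>: "path \<sigma>" "path_image \<sigma> \<subseteq> UNIV \<times> {c 2..c 0}"
    "snd (pathstart \<sigma>) = c 2" "snd (pathfinish \<sigma>) = c 0" "snd w = c 0" "snd (f w) = c 2"
    "\<And>u. u \<in> path_image \<sigma> \<Longrightarrow> u = f w \<or> (\<exists>v. u = f v \<and> c 0 < snd v)"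
    by (rule crossing_barrier) blast
  obtain B where B: "\<And>z. z \<in> path_image \<sigma> \<Longrightarrow> norm z \<le> B"
    using bounded_path_image[OF \<sigma>(1)] by (auto simp: bounded_iff)
  have "\<bar>fst z\<bar> \<le> B" if "z \<in> path_image \<sigma>" for z
    using B[OF that] norm_fst_le[of "fst z" "snd z"] by simp
  then have image_\<sigma>: "path_image \<sigma> \<subseteq> {-B..B} \<times> {c 2..c 0}"
    using \<sigma>(2) by (force simp: mem_Times_iff abs_le_iff)
  \<comment> \<open>translates of \<sigma> lie in f(U^+_{\<Gamma>_0}) apart from the points f(w + k), which are on \<Gamma>_2\<close>
  have avoid: "(\<lambda>z. z + (of_int k, 0)) ` path_image \<sigma> \<inter> approx 1 = {}" for k :: int
  proof -
    have False if z: "z \<in> path_image \<sigma>" and u: "snd u \<le> c i" "z + (of_int k, 0) = f u"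
      and above: "c (Suc i) \<le> snd (z + (of_int k, 0))" for z u
      using \<sigma>(7)[OF z]
    proof (elim disjE exE conjE)
      assume "z = f w"
      then have "u = w + (of_int k, 0)"
        using u(2) by (metis f_translate g_f)
      then have "i = 0" using u(1) \<sigma>(5) i_le_1 c_decreasing by (cases i) auto
      then show False using above \<open>z = f w\<close> \<sigma>(6) c_decreasing by simp
    next
      fix v assume "z = f v" "c 0 < snd v"
      then have "u = v + (of_int k, 0)"
        using u(2) by (metis f_translate g_f)
      then show False using u(1) \<open>c 0 < snd v\<close> c_i(1) by simp
    qed
    then show ?thesis by (fastforce simp: approx_def)
  qed
  have "fst q - fst p \<le> B - (- B) + 2"
    if "connected C" "C \<subseteq> approx 1" "p \<in> C" "q \<in> C" for C p q
    using approx_1_subset_strip avoid that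
    by (intro connected_avoiding_translates_fst_bounded[OF \<sigma>(1) image_\<sigma> \<sigma>(3,4)]) blast+
  then show ?thesis
    using that[of "2 * B + 2"] by (smt (verit))
qed

lemma compact_component_subset_approx_1:
  assumes "closed S" "S \<subseteq> approx 1"
  shows "compact (connected_component_set S x)"
proof -
  obtain W where W: "\<And>C p q. connected C \<Longrightarrow> C \<subseteq> approx 1 \<Longrightarrow> p \<in> C \<Longrightarrow> q \<in> C \<Longrightarrow> \<bar>fst q - fst p\<bar> \<le> W"
    by (rule approx_1_connected_fst_bounded) blast
  have sub: "connected_component_set S x \<subseteq> approx 1"
    using connected_component_subset assms(2) by (rule order.trans)
  have "connected_component_set S x \<subseteq> {fst x - W..fst x + W} \<times> {c 2..c 0}"
  proof
    fix q assume q: "q \<in> connected_component_set S x"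
    then have "x \<in> connected_component_set S x"
      using connected_component_in connected_component_refl by (metis mem_Collect_eq)
    then have "\<bar>fst q - fst x\<bar> \<le> W"
      by (rule W[OF connected_connected_component sub _ q])
    moreover have "q \<in> UNIV \<times> {c 2..c 0}"
      using q sub approx_1_subset_strip by blast
    ultimately show "q \<in> {fst x - W..fst x + W} \<times> {c 2..c 0}"
      by (auto simp: mem_Times_iff abs_le_iff)
  qed
  then have "bounded (connected_component_set S x)"
    by (rule bounded_subset[OF compact_imp_bounded[OF compact_Times[OF compact_Icc compact_Icc]]])
  then show ?thesis
    using closed_connected_component[OF assms(1)] by (simp add: compact_eq_bounded_closed)
qed

lemma component_approx_meets_line:
  assumes "x \<in> approx n"
  shows "connected_component_set (approx n) x \<inter> hline (c (Suc i)) \<noteq> {}"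
proof -
  obtain p where p: "snd p \<le> c i" "x = (f ^^ n) p" and x: "c (Suc i) \<le> snd x"
    using assms by (auto simp: approx_def)
  \<comment> \<open>follow the image under f^n of the vertical ray going down from p until it first reaches \<Gamma>_{i+1}\<close>
  define \<phi> where "\<phi> t = (f ^^ n) (p - (0, t))" for t
  have cont: "continuous_on S \<phi>" for S
    unfolding \<phi>_def
    by (rule continuous_on_compose2[OF homeomorphism_cont1[OF homeomorphism_funpow_f]])
      (auto intro!: continuous_intros)
  define T0 where "T0 = max 0 (snd p - c (Suc i) + 1)"
  have "snd (p - (0, T0)) < c (Suc i)"
    by (simp add: T0_def)
  then have reach_end: "- c (Suc i) \<le> - snd (\<phi> T0)"
    using snd_funpow_lt[OF c_i(4), of _ n] by (simp add: \<phi>_def less_imp_le)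
  have reach_start: "- snd (\<phi> 0) \<le> - c (Suc i)"
    using x p(2) by (simp add: \<phi>_def zero_prod_def[symmetric])
  have "continuous_on {0..T0} (\<lambda>t. - snd (\<phi> t))"
    by (intro continuous_intros cont)
  then obtain ts where ts: "0 \<le> ts" "ts \<le> T0" "- snd (\<phi> ts) = - c (Suc i)"
    "\<And>s. 0 \<le> s \<Longrightarrow> s \<le> ts \<Longrightarrow> - snd (\<phi> s) \<le> - c (Suc i)"
    by (rule continuous_on_first_reach[where y = "- c (Suc i)"])
      (use reach_start reach_end in \<open>auto simp: T0_def\<close>)
  have "\<phi> ` {0..ts} \<subseteq> approx n"
  proof
    fix y assume "y \<in> \<phi> ` {0..ts}"
    then obtain s where s: "0 \<le> s" "s \<le> ts" "y = \<phi> s" by auto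
    have "y \<in> (f ^^ n) ` {z. snd z \<le> c i}"
      using s(1,3) p(1) by (auto simp: \<phi>_def)
    then show "y \<in> approx n"
      using ts(4)[OF s(1,2)] s(3) by (simp add: approx_def)
  qed
  moreover have "connected (\<phi> ` {0..ts})"
    by (intro connected_continuous_image cont connected_Icc)
  moreover have "x \<in> \<phi> ` {0..ts}"
  proof (rule image_eqI)
    show "x = \<phi> 0" using p(2) by (simp add: \<phi>_def zero_prod_def[symmetric])
  qed (use ts(1) in simp)
  ultimately have "\<phi> ` {0..ts} \<subseteq> connected_component_set (approx n) x"
    by (intro connected_component_maximal)
  moreover have "\<phi> ts \<in> \<phi> ` {0..ts} \<inter> hline (c (Suc i))"
    using ts by (simp add: hline_def)
  ultimately show ?thesis by blast
qed

lemma Lambda_minus_eq_Suc: "Lambda_minus f c i = (\<Inter>n. approx (Suc n))"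
  unfolding Lambda_minus_eq
  by (rule equalityI, blast) (use approx_Suc_subset in blast)

lemma closed_Lambda_minus: "closed (Lambda_minus f c i)"
  unfolding Lambda_minus_eq by (intro closed_INT ballI closed_approx)

lemma Lambda_minus_subset_approx: "Lambda_minus f c i \<subseteq> approx n"
  unfolding Lambda_minus_eq by blast

lemma compact_component_Lambda: "compact (connected_component_set (Lambda_minus f c i) x)"
  by (rule compact_component_subset_approx_1[OF closed_Lambda_minus Lambda_minus_subset_approx])

lemma component_Lambda_subset_band: "connected_component_set (Lambda_minus f c i) x \<subseteq> band c i"
  using connected_component_subset Lambda_minus_subset_approx[of 0]
  by (fastforce simp: approx_def band_def)

lemma component_Lambda_meets_line:
  assumes "x \<in> Lambda_minus f c i"
  shows "connected_component_set (Lambda_minus f c i) x \<inter> hline (c (Suc i)) \<noteq> {}"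
  unfolding Lambda_minus_eq_Suc
proof (rule connected_component_Inter_meets)
  show "closed (hline (c (Suc i)))"
    unfolding hline_def by (intro closed_Collect_eq continuous_intros)
  show "approx (Suc n) \<subseteq> approx (Suc m)" if "m \<le> n" for m n
    using that by (intro approx_antimono) simp
  show "compact (connected_component_set (approx (Suc n)) x)" for n
    using approx_antimono[of 1 "Suc n"] by (intro compact_component_subset_approx_1 closed_approx) simp
  show "connected_component_set (approx (Suc n)) x \<inter> hline (c (Suc i)) \<noteq> {}" for n
    using assms Lambda_minus_subset_approx by (intro component_approx_meets_line) blast
qed

lemma g_Lambda_minus: "g ` Lambda_minus f c i \<subseteq> Lambda_minus f c i"
proof -
  have "g u \<in> approx n" if u: "u \<in> Lambda_minus f c i" for u n
  proof -
    have "u \<in> approx (Suc n)" using u Lambda_minus_subset_approx by blast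
    then obtain p where p: "snd p \<le> c i" "u = (f ^^ Suc n) p" "c (Suc i) \<le> snd u"
      unfolding approx_def by blast
    have "g u = (f ^^ n) p" using p(2) by simp
    moreover have "c (Suc i) \<le> snd (g u)"
      using snd_f_lt[OF c_i(4), of "g u"] p(3) by force
    ultimately show ?thesis using p(1) by (auto simp: approx_def)
  qed
  then show ?thesis by (auto simp: Lambda_minus_eq)
qed

lemma inv_image_component_Lambda:
  "inv f ` connected_component_set (Lambda_minus f c i) x
     \<subseteq> connected_component_set (Lambda_minus f c i) (inv f x)"
proof (cases "x \<in> Lambda_minus f c i")
  case True
  show ?thesis
    unfolding inv_f_eq_g
  proof (rule connected_component_maximal)
    show "g x \<in> g ` connected_component_set (Lambda_minus f c i) x"
      using True by (simp add: connected_component_refl)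
    show "connected (g ` connected_component_set (Lambda_minus f c i) x)"
      by (intro connected_continuous_image continuous_on_g connected_connected_component)
    show "g ` connected_component_set (Lambda_minus f c i) x \<subseteq> Lambda_minus f c i"
      using g_Lambda_minus connected_component_subset by blast
  qed
next
  case False
  then have "connected_component_set (Lambda_minus f c i) x = {}"
    by (metis connected_component_eq_empty)
  then show ?thesis by (metis image_empty empty_subsetI)
qed

lemma diameter_fst_component_Lambda_bounded:
  "\<exists>M>0. \<forall>x\<in>Lambda_minus f c i. diameter (fst ` connected_component_set (Lambda_minus f c i) x) < M"
proof -
  obtain W where W: "\<And>C p q. connected C \<Longrightarrow> C \<subseteq> approx 1 \<Longrightarrow> p \<in> C \<Longrightarrow> q \<in> C \<Longrightarrow> \<bar>fst q - fst p\<bar> \<le> W"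
    by (rule approx_1_connected_fst_bounded) blast
  have bound: "diameter (fst ` connected_component_set (Lambda_minus f c i) x) \<le> \<bar>W\<bar>" for x
  proof (rule diameter_le)
    fix a b assume "a \<in> fst ` connected_component_set (Lambda_minus f c i) x"
      "b \<in> fst ` connected_component_set (Lambda_minus f c i) x"
    then obtain u v where uv: "u \<in> connected_component_set (Lambda_minus f c i) x" "a = fst u"
      "v \<in> connected_component_set (Lambda_minus f c i) x" "b = fst v"
      by blast
    have "connected_component_set (Lambda_minus f c i) x \<subseteq> approx 1"
      using connected_component_subset Lambda_minus_subset_approx by (rule order.trans)
    then have "\<bar>fst u - fst v\<bar> \<le> W"
      by (rule W[OF connected_connected_component _ uv(3,1)])
    then show "norm (a - b) \<le> \<bar>W\<bar>" using uv(2,4) by simp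
  qed simp
  show ?thesis
  proof (intro exI conjI ballI)
    show "0 < \<bar>W\<bar> + 1" by simp
    show "diameter (fst ` connected_component_set (Lambda_minus f c i) x) < \<bar>W\<bar> + 1" for x
      using bound[of x] by linarith
  qed
qed

end

theorem proposition6p5:
  fixes f :: "real \<times> real \<Rightarrow> real \<times> real"
    and c :: "nat \<Rightarrow> real"
    and i :: nat
  assumes homeo: "\<exists>g. homeomorphism UNIV UNIV f g"
    and isot: "isotopic_to_id f"
    and commT: "\<forall>z. f (T z) = T (f z)"
    and H1_order: "c 0 > c 1" "c 1 > c 2"
    and H1_push: "\<forall>j\<le>2. f ` hline (c j) \<subseteq> Uminus (c j)"
    and H2: "\<forall>n::nat. n \<ge> 1 \<longrightarrow> (f ^^ n) ` hline (c 0) \<inter> hline (c 2) \<noteq> {}"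
    and i01: "i \<in> {0, 1}"
  shows "(\<forall>x\<in>Lambda_minus f c i.
            compact (connected_component_set (Lambda_minus f c i) x) \<and>
            connected_component_set (Lambda_minus f c i) x \<subseteq> band c i \<and>
            connected_component_set (Lambda_minus f c i) x \<inter> hline (c (Suc i)) \<noteq> {} \<and>
            inv f ` connected_component_set (Lambda_minus f c i) x
              \<subseteq> connected_component_set (Lambda_minus f c i) (inv f x))
       \<and> (\<exists>M>0. \<forall>x\<in>Lambda_minus f c i.
            diameter (fst ` connected_component_set (Lambda_minus f c i) x) < M)"
proof -
  obtain g where "homeomorphism UNIV UNIV f g" using homeo by blast
  moreover have "f ` hline (c 0) \<inter> hline (c 2) \<noteq> {}" using H2 by force
  ultimately interpret lambda_band f g c i
    using commT H1_order H1_push i01 by unfold_locales auto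
  show ?thesis
    using compact_component_Lambda component_Lambda_subset_band component_Lambda_meets_line
      inv_image_component_Lambda diameter_fst_component_Lambda_bounded by blast
qed

end
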